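(* For any positive integers $k,\Delta$ with $3 \le k\le \Delta$ and any positive integers $x_1,\dots,x_k$ with $1\le x_j \le \Delta$, $$ \frac{2}{k-1} \sum_{1\le i<j \le k} \frac1{x_i+x_j+2k-4} \le \sum_{j=1}^k \frac1{x_j+k} \le 2\,\frac{\Delta+2k-3}{k^2-1} \sum_{1\le i<j \le k} \frac1{x_i+x_j+2k-4} \, . $$ *)

theory Defs
  imports Complex_Main
begin

end

theory Submission
  imports Defs
begin

text \<open>Put \<open>u\<^sub>j = x\<^sub>j + k\<close>, so that the pair denominators become \<open>u\<^sub>i + u\<^sub>j - 4\<close> and every
  \<open>u\<^sub>j\<close> lies in \<open>[k + 1, \<Delta> + k]\<close>. Both inequalities then hold term by term for each pair:
  \<open>2/(u + v - 4) \<le> 1/u + 1/v\<close> once \<open>u, v \<ge> 4\<close>, and \<open>1/u + 1/v \<le> 2(M + m - 4)/m \<cdot> 1/(u + v - 4)\<close>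
  for \<open>u, v \<in> [m, M]\<close> with \<open>m \<ge> 4\<close>. Summing over the pairs \<open>i < j\<close> counts each \<open>1/u\<^sub>j\<close> exactly
  \<open>k - 1\<close> times.\<close>

lemma two_div_le_inverse_add:
  fixes u v :: real
  assumes "4 \<le> u" "4 \<le> v"
  shows "2 / (u + v - 4) \<le> 1 / u + 1 / v"
proof -
  have "0 \<le> u * (u - 4) + v * (v - 4)"
    using assms by (intro add_nonneg_nonneg mult_nonneg_nonneg) auto
  then have "2 * (u * v) \<le> (u + v) * (u + v - 4)"
    by (simp add: algebra_simps)
  with assms show ?thesis
    by (simp add: field_simps)
qed

lemma inverse_add_le_on_interval:
  fixes u v m M :: real
  assumes "4 \<le> m" "m \<le> u" "u \<le> M" "m \<le> v" "v \<le> M"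
  shows "1 / u + 1 / v \<le> 2 * (M + m - 4) / m * (1 / (u + v - 4))"
proof -
  text \<open>Equality holds at \<open>{u, v} = {m, M}\<close>, so the constant is sharp; the difference of the
    two sides is a nonnegative combination of products of \<open>u - m, M - u, v - m, M - v, m - 4\<close>.\<close>
  have certificate: "2 * (M + m - 4) * (u * v) - m * ((u + v) * (u + v - 4))
      = m * (u - m) * (M - u) + m * (v - m) * (M - v) + 2 * (M - m) * m * (m - 4)
        + 4 * m * (M - u) + 4 * m * (M - v) + m * (M - m) * ((u - m) + (v - m))
        + 2 * (M - 4) * (u - m) * (v - m)" (is "_ = ?R")
    by (simp add: algebra_simps)
  have "0 \<le> ?R"
    using assms by (intro add_nonneg_nonneg mult_nonneg_nonneg) auto
  then have key: "m * ((u + v) * (u + v - 4)) \<le> 2 * (M + m - 4) * (u * v)"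
    by (simp only: certificate [symmetric])
  have "1 / u + 1 / v = (u + v) / (u * v)"
    using assms by (simp add: field_simps)
  also have "\<dots> \<le> 2 * (M + m - 4) / (m * (u + v - 4))"
    using assms key by (simp add: divide_le_eq le_divide_eq mult_ac)
  finally show ?thesis
    by simp
qed

definition strict_pairs :: "nat \<Rightarrow> (nat \<times> nat) set" where
  "strict_pairs n = {(i, j). 1 \<le> i \<and> i < j \<and> j \<le> n}"

lemma finite_strict_pairs: "finite (strict_pairs n)"
  by (rule finite_subset[of _ "{1..n} \<times> {1..n}"]) (auto simp: strict_pairs_def)

lemma strict_pairs_Suc: "strict_pairs (Suc n) = strict_pairs n \<union> (\<lambda>i. (i, Suc n)) ` {1..n}"
  by (auto simp: strict_pairs_def)

lemma sum_strict_pairs_Suc: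
  "(\<Sum>p\<in>strict_pairs (Suc n). g p) = (\<Sum>p\<in>strict_pairs n. g p) + (\<Sum>i = 1..n. g (i, Suc n))"
proof -
  have "(\<Sum>p\<in>strict_pairs (Suc n). g p)
      = (\<Sum>p\<in>strict_pairs n. g p) + (\<Sum>p\<in>(\<lambda>i. (i, Suc n)) ` {1..n}. g p)"
    unfolding strict_pairs_Suc
    by (intro sum.union_disjoint finite_strict_pairs) (auto simp: strict_pairs_def)
  also have "(\<Sum>p\<in>(\<lambda>i. (i, Suc n)) ` {1..n}. g p) = (\<Sum>i = 1..n. g (i, Suc n))"
    by (subst sum.reindex) (auto simp: inj_on_def)
  finally show ?thesis .
qed

lemma sum_strict_pairs_add:
  fixes g :: "nat \<Rightarrow> 'a::comm_ring_1"
  shows "(\<Sum>(i, j)\<in>strict_pairs n. g i + g j) = (of_nat n - 1) * (\<Sum>j = 1..n. g j)"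
proof (induction n)
  case 0
  have "strict_pairs 0 = {}"
    by (auto simp: strict_pairs_def)
  then show ?case by simp
next
  case (Suc n)
  have "(\<Sum>(i, j)\<in>strict_pairs (Suc n). g i + g j)
      = (of_nat n - 1) * (\<Sum>j = 1..n. g j) + (\<Sum>i = 1..n. g i + g (Suc n))"
    by (simp add: sum_strict_pairs_Suc Suc.IH)
  also have "\<dots> = of_nat n * (\<Sum>j = 1..Suc n. g j)"
    by (simp add: sum.distrib algebra_simps)
  finally show ?case by simp
qed

lemma sum_strict_pairs_le_add:
  fixes f :: "nat \<Rightarrow> nat \<Rightarrow> 'a::linordered_idom"
  assumes "\<And>i j. 1 \<le> i \<Longrightarrow> i < j \<Longrightarrow> j \<le> n \<Longrightarrow> c * f i j \<le> g i + g j"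
  shows "c * (\<Sum>(i, j)\<in>strict_pairs n. f i j) \<le> (of_nat n - 1) * (\<Sum>j = 1..n. g j)"
proof -
  have "c * (\<Sum>(i, j)\<in>strict_pairs n. f i j) = (\<Sum>(i, j)\<in>strict_pairs n. c * f i j)"
    by (simp add: sum_distrib_left case_prod_unfold)
  also have "\<dots> \<le> (\<Sum>(i, j)\<in>strict_pairs n. g i + g j)"
    by (rule sum_mono) (auto simp: strict_pairs_def assms)
  finally show ?thesis
    by (simp only: sum_strict_pairs_add)
qed

lemma sum_strict_pairs_add_le:
  fixes f :: "nat \<Rightarrow> nat \<Rightarrow> 'a::linordered_idom"
  assumes "\<And>i j. 1 \<le> i \<Longrightarrow> i < j \<Longrightarrow> j \<le> n \<Longrightarrow> g i + g j \<le> c * f i j"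
  shows "(of_nat n - 1) * (\<Sum>j = 1..n. g j) \<le> c * (\<Sum>(i, j)\<in>strict_pairs n. f i j)"
proof -
  have "(\<Sum>(i, j)\<in>strict_pairs n. g i + g j) \<le> (\<Sum>(i, j)\<in>strict_pairs n. c * f i j)"
    by (rule sum_mono) (auto simp: strict_pairs_def assms)
  also have "\<dots> = c * (\<Sum>(i, j)\<in>strict_pairs n. f i j)"
    by (simp add: sum_distrib_left case_prod_unfold)
  finally show ?thesis
    by (simp only: sum_strict_pairs_add)
qed

theorem lemma3p3:
  fixes k \<Delta> :: nat and x :: "nat \<Rightarrow> nat"
  assumes "3 \<le> k" and "k \<le> \<Delta>"
    and "\<And>j. j \<in> {1..k} \<Longrightarrow> 1 \<le> x j \<and> x j \<le> \<Delta>"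
  shows "2 / (real k - 1) * (\<Sum>(i, j) \<in> {(i, j). 1 \<le> i \<and> i < j \<and> j \<le> k}.
             1 / (real (x i) + real (x j) + 2 * real k - 4))
           \<le> (\<Sum>j = 1..k. 1 / (real (x j) + real k))
       \<and> (\<Sum>j = 1..k. 1 / (real (x j) + real k))
           \<le> 2 * (real \<Delta> + 2 * real k - 3) / ((real k)\<^sup>2 - 1) *
             (\<Sum>(i, j) \<in> {(i, j). 1 \<le> i \<and> i < j \<and> j \<le> k}.
               1 / (real (x i) + real (x j) + 2 * real k - 4))"
proof -
  define u where "u j = real (x j) + real k" for j
  define S where "S = (\<Sum>j = 1..k. 1 / u j)"
  define P where "P = (\<Sum>(i, j)\<in>strict_pairs k. 1 / (u i + u j - 4))"
  define C where "C = 2 * (real \<Delta> + 2 * real k - 3) / (real k + 1)"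
  have u_bounds: "4 \<le> real k + 1" "4 \<le> u j" "real k + 1 \<le> u j" "u j \<le> real \<Delta> + real k"
    if "1 \<le> j" "j \<le> k" for j
    using that assms(1) assms(3)[of j] by (auto simp: u_def)
  have lower: "2 * P \<le> (real k - 1) * S"
    unfolding P_def S_def
    by (rule sum_strict_pairs_le_add) (use u_bounds two_div_le_inverse_add in auto)
  have upper: "(real k - 1) * S \<le> C * P"
    unfolding P_def S_def
  proof (rule sum_strict_pairs_add_le)
    fix i j assume "1 \<le> i" "i < j" "j \<le> k"
    with u_bounds[of i] u_bounds[of j]
      inverse_add_le_on_interval[of "real k + 1" "u i" "real \<Delta> + real k" "u j"]
    show "1 / u i + 1 / u j \<le> C * (1 / (u i + u j - 4))"
      by (simp add: C_def add_ac add_diff_eq)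
  qed
  have k_gt_1: "1 < real k"
    using assms(1) by simp
  have "2 / (real k - 1) * P \<le> S"
    using lower k_gt_1 by (simp add: field_simps)
  moreover have "S \<le> C / (real k - 1) * P"
    using upper k_gt_1 by (simp add: field_simps)
  moreover have "C / (real k - 1) = 2 * (real \<Delta> + 2 * real k - 3) / ((real k)\<^sup>2 - 1)"
    using k_gt_1 by (simp add: C_def power2_eq_square field_simps)
  ultimately show ?thesis
    by (simp add: P_def S_def u_def strict_pairs_def add_ac)
qed

end
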